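(* Let $f:G\to H$ be a surjective group homomorphism. If there exists a surjective homomorphism $\varphi:H\to K$ onto a finite noncyclic group $K$ such that $f$ admits a local section on $\varphi^{-1}(\langle b\rangle)$ for every $b\in K$ with $b\neq 1$, then $\mathrm{sec}(f)<\infty$. Conversely, if $H$ is abelian and $\mathrm{sec}(f)<\infty$, then such a $K$ and $\varphi$ exist.
   Context: For a homomorphism $f:G\to H$ and a subgroup $L\le H$, a local section of $f$ on $L$ is a homomorphism $s:L\to G$ with $f\circ s=\mathrm{incl}_L$ (the inclusion $L\hookrightarrow H$). The sectional number $\mathrm{sec}(f)$ is the least positive integer $m$ such that there exist proper subgroups $H_1,\ldots,H_m$ of $H$ with $H=H_1\cup\cdots\cup H_m$ and such that $f$ admits a local section on each $H_i$; $\mathrm{sec}(f)=\infty$ if no such $m$ exists. *)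

theory Defs
  imports "HOL-Algebra.Algebra" "HOL-Library.Extended_Nat"
begin

definition has_local_section ::
  "('a, 'c) monoid_scheme \<Rightarrow> ('b, 'd) monoid_scheme \<Rightarrow> ('a \<Rightarrow> 'b) \<Rightarrow> 'b set \<Rightarrow> bool" where
  "has_local_section G H f L \<longleftrightarrow>
     (\<exists>s. s \<in> hom (H\<lparr>carrier := L\<rparr>) G \<and> (\<forall>x \<in> L. f (s x) = x))"

text \<open>Sectional number: least m > 0 such that H is a union of m proper subgroups,
  on each of which f admits a local section; \<infinity> if none exists (Inf {} = \<infinity>).\<close>
definition sectional_number ::
  "('a, 'c) monoid_scheme \<Rightarrow> ('b, 'd) monoid_scheme \<Rightarrow> ('a \<Rightarrow> 'b) \<Rightarrow> enat" where
  "sectional_number G H f = Inf {enat m | m. m > 0 \<and>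
     (\<exists>Hs :: nat \<Rightarrow> 'b set.
        (\<forall>i < m. subgroup (Hs i) H \<and> Hs i \<noteq> carrier H \<and> has_local_section G H f (Hs i)) \<and>
        (\<Union>i < m. Hs i) = carrier H)}"

end

(* If phi maps H onto a finite noncyclic group K, the preimages of the cyclic subgroups <b>,
   b <> 1, are finitely many subgroups covering H; they are proper, since K = <b> would make K
   cyclic, and f has a local section on each of them by hypothesis.

   Conversely, let H be the union of finitely many proper subgroups on which f has local
   sections. By B. H. Neumann's lemma the members of finite index already cover H. Their
   intersection N has finite index and is normal because H is abelian; take K = H/N. The
   preimage of <Nh> lies in every covering subgroup that contains h, because those subgroups
   contain N. Hence f has a local section on it, and K is not cyclic: the preimage of a
   generator would be all of H. *)

theory Submission
  imports Defs
begin

lemma (in group) r_coset_Inter: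
  assumes "\<B> \<noteq> {}" "\<And>B. B \<in> \<B> \<Longrightarrow> B \<subseteq> carrier G" "g \<in> carrier G"
  shows "(\<Inter>\<B>) #> g = (\<Inter>B\<in>\<B>. B #> g)"
proof
  show "(\<Inter>\<B>) #> g \<subseteq> (\<Inter>B\<in>\<B>. B #> g)"
    unfolding r_coset_def by blast
  show "(\<Inter>B\<in>\<B>. B #> g) \<subseteq> (\<Inter>\<B>) #> g"
  proof
    fix z assume z: "z \<in> (\<Inter>B\<in>\<B>. B #> g)"
    have zg: "z \<otimes> inv g \<in> B" if B: "B \<in> \<B>" for B
    proof -
      obtain b where "b \<in> B" "z = b \<otimes> g"
        using z B unfolding r_coset_def by blast
      then show ?thesis
        using assms(2)[OF B] assms(3) by (auto simp: m_assoc)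
    qed
    obtain B where "B \<in> \<B>" using assms(1) by blast
    then have "z \<in> carrier G"
      using z r_coset_subset_G[OF assms(2) assms(3)] by blast
    then have "z = (z \<otimes> inv g) \<otimes> g"
      using assms(3) by (simp add: m_assoc)
    then show "z \<in> (\<Inter>\<B>) #> g"
      using zg unfolding r_coset_def by blast
  qed
qed

lemma (in group) finite_rcosets_carrier: "finite (rcosets (carrier G))"
proof -
  have "rcosets (carrier G) \<subseteq> {carrier G}"
    using subgroup.rcos_const[OF subgroup_self is_group] unfolding RCOSETS_def by auto
  then show ?thesis
    using finite_subset by blast
qed

lemma (in group) finite_index_Inter:
  assumes "finite \<B>" "\<B> \<noteq> {}"
    and "\<And>B. B \<in> \<B> \<Longrightarrow> subgroup B G" "\<And>B. B \<in> \<B> \<Longrightarrow> finite (rcosets B)"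
  shows "finite (rcosets (\<Inter>\<B>))"
proof -
  have "rcosets (\<Inter>\<B>) \<subseteq> (\<lambda>F. \<Inter>B\<in>\<B>. F B) ` (\<Pi>\<^sub>E B\<in>\<B>. rcosets B)"
  proof
    fix C assume "C \<in> rcosets (\<Inter>\<B>)"
    then obtain g where g: "g \<in> carrier G" "C = (\<Inter>\<B>) #> g"
      unfolding RCOSETS_def by blast
    have "(\<Inter>\<B>) #> g = (\<Inter>B\<in>\<B>. B #> g)"
      using r_coset_Inter[OF assms(2) _ g(1)] assms(3) subgroup.subset by blast
    then have "C = (\<Inter>B\<in>\<B>. (\<lambda>B\<in>\<B>. B #> g) B)"
      using g(2) by simp
    moreover have "(\<lambda>B\<in>\<B>. B #> g) \<in> (\<Pi>\<^sub>E B\<in>\<B>. rcosets B)"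
      using rcosetsI[OF subgroup.subset[OF assms(3)] g(1)] by auto
    ultimately show "C \<in> (\<lambda>F. \<Inter>B\<in>\<B>. F B) ` (\<Pi>\<^sub>E B\<in>\<B>. rcosets B)"
      by blast
  qed
  moreover have "finite (\<Pi>\<^sub>E B\<in>\<B>. rcosets B)"
    using assms(1,4) by (rule finite_PiE)
  ultimately show ?thesis
    using finite_subset by blast
qed

lemma (in group) r_coset_cover_translate:
  assumes cover: "A #> x \<subseteq> (\<Union>(B, h)\<in>C. B #> h)"
    and "A \<subseteq> carrier G" "x \<in> carrier G" "g \<in> carrier G"
    and C: "\<And>B h. (B, h) \<in> C \<Longrightarrow> B \<subseteq> carrier G \<and> h \<in> carrier G"
  shows "A #> g \<subseteq> (\<Union>(B, h)\<in>C. B #> (h \<otimes> (inv x \<otimes> g)))"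
proof
  fix y assume "y \<in> A #> g"
  then obtain a where a: "a \<in> A" "y = a \<otimes> g"
    unfolding r_coset_def by blast
  then have "a \<otimes> x \<in> A #> x"
    unfolding r_coset_def by blast
  then obtain B h b where Bh: "(B, h) \<in> C" "b \<in> B" "a \<otimes> x = b \<otimes> h"
    using cover unfolding r_coset_def by blast
  have "x \<otimes> (inv x \<otimes> g) = g"
    using assms(3,4) by (simp add: m_assoc[symmetric])
  then have "y = (a \<otimes> x) \<otimes> (inv x \<otimes> g)"
    using a assms(2-4) by (auto simp: m_assoc)
  also have "\<dots> = b \<otimes> (h \<otimes> (inv x \<otimes> g))"
    using Bh C[OF Bh(1)] assms(3,4) by (auto simp: m_assoc)
  finally show "y \<in> (\<Union>(B, h)\<in>C. B #> (h \<otimes> (inv x \<otimes> g)))"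
    using Bh unfolding r_coset_def by blast
qed

lemma (in group) r_coset_covered_by_other_subgroups:
  assumes "finite C" and C: "\<And>B g. (B, g) \<in> C \<Longrightarrow> subgroup B G \<and> g \<in> carrier G"
    and cover: "carrier G \<subseteq> (\<Union>(B, g)\<in>C. B #> g)"
    and A: "subgroup A G" "infinite (rcosets A)"
  obtains x where "x \<in> carrier G" "A #> x \<subseteq> (\<Union>(B, h)\<in>{(B, h) \<in> C. B \<noteq> A}. B #> h)"
proof -
  have "finite ((\<lambda>(B, g). B #> g) ` C)"
    using \<open>finite C\<close> by simp
  then have "\<not> rcosets A \<subseteq> (\<lambda>(B, g). B #> g) ` C"
    using A(2) finite_subset by blast
  then obtain U where "U \<in> rcosets A" "U \<notin> (\<lambda>(B, g). B #> g) ` C"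
    by blast
  then obtain x where x: "x \<in> carrier G" "A #> x \<notin> (\<lambda>(B, g). B #> g) ` C"
    unfolding RCOSETS_def by blast
  show thesis
  proof (rule that[OF x(1)], rule subsetI)
    fix z assume z: "z \<in> A #> x"
    then have "z \<in> carrier G"
      using r_coset_subset_G[OF subgroup.subset[OF A(1)] x(1)] by blast
    then obtain B h where Bh: "(B, h) \<in> C" "z \<in> B #> h"
      using cover by blast
    have "B \<noteq> A"
    proof
      assume "B = A"
      then have "A #> x \<in> rcosets A" "A #> h \<in> rcosets A" "z \<in> (A #> x) \<inter> (A #> h)"
        using rcosetsI[OF subgroup.subset[OF A(1)]] x(1) C[OF Bh(1)] Bh(2) z by auto
      then have "A #> x = A #> h"
        using rcos_disjoint[OF A(1)] unfolding pairwise_def disjnt_def by blast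
      then show False
        using x(2) Bh(1) \<open>B = A\<close> by force
    qed
    then show "z \<in> (\<Union>(B, h)\<in>{(B, h) \<in> C. B \<noteq> A}. B #> h)"
      using Bh by blast
  qed
qed

(* A coset A x lying in the cosets of the other subgroups gives the same for every coset
   A g = (A x) (inv x g); so the cosets of A can be dropped from the cover. *)
lemma (in group) coset_cover_shift:
  assumes C: "\<And>B g. (B, g) \<in> C \<Longrightarrow> subgroup B G \<and> g \<in> carrier G"
    and cover: "carrier G \<subseteq> (\<Union>(B, g)\<in>C. B #> g)"
    and A: "subgroup A G" and x: "x \<in> carrier G"
    and escape: "A #> x \<subseteq> (\<Union>(B, h)\<in>{(B, h) \<in> C. B \<noteq> A}. B #> h)"
  shows "carrier G \<subseteq> (\<Union>(B, h)\<in>{(B, h) \<in> C. B \<noteq> A}.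
                          \<Union>t\<in>insert \<one> ((\<lambda>(B, g). inv x \<otimes> g) ` C). B #> (h \<otimes> t))"
    (is "_ \<subseteq> ?shifted")
proof
  fix y assume "y \<in> carrier G"
  then obtain B g where Bg: "(B, g) \<in> C" "y \<in> B #> g"
    using cover by blast
  have g: "g \<in> carrier G"
    using C[OF Bg(1)] by blast
  show "y \<in> ?shifted"
  proof (cases "B = A")
    case False
    then show ?thesis
      using Bg g by force
  next
    case True
    have "A #> g \<subseteq> (\<Union>(B, h)\<in>{(B, h) \<in> C. B \<noteq> A}. B #> (h \<otimes> (inv x \<otimes> g)))"
      using escape subgroup.subset[OF A] x g C subgroup.subset
      by (intro r_coset_cover_translate) blast+
    then show ?thesis
      using Bg True by force
  qed
qed

lemma (in group) coset_cover_eliminate: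
  assumes "finite C" and C: "\<And>B g. (B, g) \<in> C \<Longrightarrow> subgroup B G \<and> g \<in> carrier G"
    and cover: "carrier G \<subseteq> (\<Union>(B, g)\<in>C. B #> g)"
    and A: "subgroup A G" "infinite (rcosets A)"
  obtains C' where "finite C'" "fst ` C' \<subseteq> fst ` C - {A}"
    "\<And>B g. (B, g) \<in> C' \<Longrightarrow> subgroup B G \<and> g \<in> carrier G"
    "carrier G \<subseteq> (\<Union>(B, g)\<in>C'. B #> g)"
proof -
  define Rest where "Rest = {(B, h) \<in> C. B \<noteq> A}"
  obtain x where x: "x \<in> carrier G" and escape: "A #> x \<subseteq> (\<Union>(B, h)\<in>Rest. B #> h)"
    unfolding Rest_def using r_coset_covered_by_other_subgroups[OF assms] by blast
  define T where "T = insert \<one> ((\<lambda>(B, g). inv x \<otimes> g) ` C)"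
  define C' where "C' = (\<lambda>((B, h), t). (B, h \<otimes> t)) ` (Rest \<times> T)"
  have C'E: "\<exists>h t. (B, h) \<in> Rest \<and> t \<in> T \<and> g = h \<otimes> t" if "(B, g) \<in> C'" for B g
    using that unfolding C'_def by auto
  show thesis
  proof (rule that)
    show "finite C'"
      using finite_subset[of Rest C] \<open>finite C\<close> unfolding C'_def T_def Rest_def by auto
    show "fst ` C' \<subseteq> fst ` C - {A}"
    proof
      fix B assume "B \<in> fst ` C'"
      then obtain g where "(B, g) \<in> C'" by force
      then obtain h where "(B, h) \<in> C" "B \<noteq> A"
        using C'E unfolding Rest_def by blast
      then show "B \<in> fst ` C - {A}" by force
    qed
    show "subgroup B G \<and> g \<in> carrier G" if "(B, g) \<in> C'" for B g
      using C'E[OF that] C x unfolding T_def Rest_def by fastforce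
    have "(\<Union>(B, g)\<in>C'. B #> g) = (\<Union>(B, h)\<in>Rest. \<Union>t\<in>T. B #> (h \<otimes> t))"
      unfolding C'_def by auto
    then show "carrier G \<subseteq> (\<Union>(B, g)\<in>C'. B #> g)"
      using coset_cover_shift[OF C cover A(1) x] escape unfolding Rest_def T_def by simp
  qed
qed

lemma (in group) finite_index_in_coset_cover:
  assumes "finite C" "\<And>B g. (B, g) \<in> C \<Longrightarrow> subgroup B G \<and> g \<in> carrier G"
    and "carrier G \<subseteq> (\<Union>(B, g)\<in>C. B #> g)"
  shows "\<exists>(B, g)\<in>C. finite (rcosets B)"
  using assms
proof (induction "card (fst ` C)" arbitrary: C rule: less_induct)
  case less
  obtain A g where Ag: "(A, g) \<in> C"
    using less.prems(3) one_closed by blast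
  show ?case
  proof (cases "finite (rcosets A)")
    case True
    then show ?thesis using Ag by blast
  next
    case False
    obtain C' where C': "finite C'" "fst ` C' \<subseteq> fst ` C - {A}"
      "\<And>B g. (B, g) \<in> C' \<Longrightarrow> subgroup B G \<and> g \<in> carrier G"
      "carrier G \<subseteq> (\<Union>(B, g)\<in>C'. B #> g)"
      using coset_cover_eliminate[OF less.prems] less.prems(2)[OF Ag] False by blast
    have "A \<in> fst ` C" "A \<notin> fst ` C'"
      using Ag C'(2) by force+
    then have "fst ` C' \<subset> fst ` C"
      using C'(2) by (intro psubsetI) blast+
    then have "card (fst ` C') < card (fst ` C)"
      using less.prems(1) by (intro psubset_card_mono) auto
    then have "\<exists>(B, g)\<in>C'. finite (rcosets B)"
      by (rule less.hyps[OF _ C'(1,3,4)])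
    then obtain B g' where B: "(B, g') \<in> C'" "finite (rcosets B)"
      by blast
    then have "B \<in> fst ` C"
      using C'(2) by (metis Diff_iff fst_conv image_eqI subsetD)
    then obtain g where "(B, g) \<in> C"
      by auto
    then show ?thesis
      using B(2) by blast
  qed
qed

lemma (in group) finite_index_in_cover_of_coset:
  assumes D: "subgroup D G" "finite (rcosets D)" and h\<^sub>0: "h\<^sub>0 \<in> carrier G"
    and \<B>: "finite \<B>" "\<And>B. B \<in> \<B> \<Longrightarrow> subgroup B G" and cover: "D #> h\<^sub>0 \<subseteq> \<Union>\<B>"
  shows "\<exists>B\<in>\<B>. finite (rcosets B)"
proof -
  have "B #> \<one> = B" if "B \<in> \<B>" for B
    by (rule coset_mult_one[OF subgroup.subset[OF \<B>(2)[OF that]]])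
  then have "(\<Union>(B, h)\<in>\<B> \<times> {\<one>}. B #> h) = \<Union>\<B>"
    by auto
  then have escape: "D #> h\<^sub>0 \<subseteq> (\<Union>(B, h)\<in>\<B> \<times> {\<one>}. B #> h)"
    using cover by simp
  obtain R where R: "R \<subseteq> carrier G" "finite R" "rcosets D = (\<lambda>r. D #> r) ` R"
    using finite_subset_image[of "rcosets D" "\<lambda>r. D #> r" "carrier G"] D(2)
    unfolding RCOSETS_def by blast
  define C where "C = (\<lambda>(B, r). (B, inv h\<^sub>0 \<otimes> r)) ` (\<B> \<times> R)"
  have "carrier G \<subseteq> (\<Union>(B, g)\<in>C. B #> g)"
  proof
    fix y assume y: "y \<in> carrier G"
    then have "D #> y \<in> rcosets D"
      by (rule rcosetsI[OF subgroup.subset[OF D(1)]])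
    then obtain r where r: "r \<in> R" "D #> y = D #> r"
      using R(3) by auto
    have rG: "r \<in> carrier G"
      using r(1) R(1) by blast
    have "y \<in> D #> r"
      using rcos_self[OF y D(1)] r(2) by simp
    also have "D #> r \<subseteq> (\<Union>(B, h)\<in>\<B> \<times> {\<one>}. B #> (h \<otimes> (inv h\<^sub>0 \<otimes> r)))"
      using escape subgroup.subset[OF D(1)] h\<^sub>0 rG subgroup.subset[OF \<B>(2)]
      by (intro r_coset_cover_translate) auto
    also have "\<dots> \<subseteq> (\<Union>(B, g)\<in>C. B #> g)"
      using r(1) h\<^sub>0 rG unfolding C_def by force
    finally show "y \<in> (\<Union>(B, g)\<in>C. B #> g)" .
  qed
  moreover have "finite C"
    unfolding C_def using \<B>(1) R(2) by simp
  moreover have "subgroup B G \<and> g \<in> carrier G" if "(B, g) \<in> C" for B g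
    using that \<B>(2) h\<^sub>0 R(1) unfolding C_def by auto
  ultimately obtain B g where "(B, g) \<in> C" "finite (rcosets B)"
    using finite_index_in_coset_cover by blast
  then show ?thesis
    unfolding C_def by auto
qed

lemma (in group) finite_index_subgroups_cover:
  assumes "finite \<H>" "\<And>B. B \<in> \<H> \<Longrightarrow> subgroup B G" "carrier G = \<Union>\<H>"
  shows "carrier G = \<Union>{B \<in> \<H>. finite (rcosets B)}"
proof (rule ccontr)
  define \<F> where "\<F> = {B \<in> \<H>. finite (rcosets B)}"
  assume "carrier G \<noteq> \<Union>{B \<in> \<H>. finite (rcosets B)}"
  then obtain h\<^sub>0 where h\<^sub>0: "h\<^sub>0 \<in> carrier G" "h\<^sub>0 \<notin> \<Union>\<F>"
    using assms(3) unfolding \<F>_def by blast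
  \<comment> \<open>inserting carrier G keeps D a subgroup when \<F> is empty\<close>
  define D where "D = \<Inter>(insert (carrier G) \<F>)"
  have D: "subgroup D G"
    unfolding D_def using assms(2) subgroup_self by (intro subgroups_Inter) (auto simp: \<F>_def)
  have "finite (rcosets D)"
    unfolding D_def using assms(1,2) subgroup_self finite_rcosets_carrier
    by (intro finite_index_Inter) (auto simp: \<F>_def)
  moreover have "D #> h\<^sub>0 \<subseteq> \<Union>(\<H> - \<F>)"
  proof
    fix z assume "z \<in> D #> h\<^sub>0"
    then obtain d where d: "d \<in> D" "z = d \<otimes> h\<^sub>0"
      unfolding r_coset_def by blast
    have dG: "d \<in> carrier G"
      using d(1) unfolding D_def by blast
    then obtain B where B: "B \<in> \<H>" "z \<in> B"
      using assms(3) h\<^sub>0(1) d(2) by blast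
    have "B \<notin> \<F>"
    proof
      assume "B \<in> \<F>"
      then have "d \<in> B"
        using d(1) unfolding D_def by blast
      then have "inv d \<otimes> z \<in> B"
        using assms(2)[OF B(1)] B(2) subgroup.m_closed subgroup.m_inv_closed by metis
      moreover have "inv d \<otimes> z = h\<^sub>0"
        using d(2) dG h\<^sub>0(1) by (simp add: m_assoc[symmetric])
      ultimately show False
        using h\<^sub>0(2) \<open>B \<in> \<F>\<close> by blast
    qed
    then show "z \<in> \<Union>(\<H> - \<F>)"
      using B by blast
  qed
  ultimately obtain B where "B \<in> \<H> - \<F>" "finite (rcosets B)"
    using finite_index_in_cover_of_coset[OF D _ h\<^sub>0(1)] assms(1,2) by blast
  then show False
    unfolding \<F>_def by blast
qed

lemma (in group) cyclic_group_iff_generate: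
  "cyclic_group G \<longleftrightarrow> (\<exists>b\<in>carrier G. generate G {b} = carrier G)"
proof -
  have "subgroup_generated G {b} = G \<longleftrightarrow> generate G {b} = carrier G" if "b \<in> carrier G" for b
  proof
    assume "subgroup_generated G {b} = G"
    then have "carrier (subgroup_generated G {b}) = carrier G" by simp
    then show "generate G {b} = carrier G"
      using that by (simp add: carrier_subgroup_generated)
  next
    assume "generate G {b} = carrier G"
    then show "subgroup_generated G {b} = G"
      using that by (simp add: subgroup_generated_def)
  qed
  then show ?thesis
    unfolding cyclic_group_def by auto
qed

lemma (in normal) kernel_r_coset_hom_Mod: "kernel G (G Mod H) (\<lambda>a. H #> a) = H"
proof (intro equalityI subsetI)
  fix x assume "x \<in> kernel G (G Mod H) (\<lambda>a. H #> a)"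
  then have "x \<in> carrier G" "H #> x = H"
    unfolding kernel_def FactGroup_def by simp_all
  moreover have "x \<in> H #> x"
    by (rule rcos_self[OF \<open>x \<in> carrier G\<close> subgroup_axioms])
  ultimately show "x \<in> H"
    by simp
next
  fix x assume "x \<in> H"
  then show "x \<in> kernel G (G Mod H) (\<lambda>a. H #> a)"
    unfolding kernel_def FactGroup_def using rcos_const[OF is_group] subset by auto
qed

lemma (in group_hom) subgroup_preimage:
  assumes "subgroup S H"
  shows "subgroup {x \<in> carrier G. h x \<in> S} G"
  using subgroup.one_closed[OF assms] subgroup.m_closed[OF assms] subgroup.m_inv_closed[OF assms]
  by (intro G.subgroupI) auto

lemma (in group_hom) preimage_generate_subset:
  assumes A: "subgroup A G" and ker: "kernel G H h \<subseteq> A" and a: "a \<in> A"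
  shows "{x \<in> carrier G. h x \<in> generate H {h a}} \<subseteq> A"
proof
  fix x assume x: "x \<in> {x \<in> carrier G. h x \<in> generate H {h a}}"
  have "generate H {h a} \<subseteq> h ` A"
    using a subgroup_img_is_subgroup[OF A] by (intro H.generate_subgroup_incl) auto
  then obtain a' where a': "a' \<in> A" "h x = h a'" using x by auto
  have a'G: "a' \<in> carrier G" using subgroup.mem_carrier[OF A a'(1)] .
  have "x \<otimes>\<^bsub>G\<^esub> inv\<^bsub>G\<^esub> a' \<in> kernel G H h"
    using x a' a'G by (simp add: kernel_def)
  then have "(x \<otimes>\<^bsub>G\<^esub> inv\<^bsub>G\<^esub> a') \<otimes>\<^bsub>G\<^esub> a' \<in> A"
    using ker a'(1) subgroup.m_closed[OF A] by blast
  then show "x \<in> A" using x a'G by (simp add: G.m_assoc)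
qed

lemma (in group_hom) preimage_generate_ne_carrier:
  assumes "h ` carrier G = carrier H" "\<not> cyclic_group H" "b \<in> carrier H"
  shows "{x \<in> carrier G. h x \<in> generate H {b}} \<noteq> carrier G"
proof
  assume "{x \<in> carrier G. h x \<in> generate H {b}} = carrier G"
  then have "h ` carrier G \<subseteq> generate H {b}"
    by blast
  then have "carrier H \<subseteq> generate H {b}"
    using assms(1) by simp
  moreover have "generate H {b} \<subseteq> carrier H"
    using assms(3) by (intro H.generate_incl) blast
  ultimately show False
    using assms(2,3) H.cyclic_group_iff_generate by blast
qed

lemma (in group_hom) preimages_of_cyclic_subgroups_cover:
  assumes "carrier H \<noteq> {\<one>\<^bsub>H\<^esub>}"
  shows "carrier G = (\<Union>b \<in> carrier H - {\<one>\<^bsub>H\<^esub>}. {x \<in> carrier G. h x \<in> generate H {b}})"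
proof (intro equalityI subsetI)
  fix x assume x: "x \<in> carrier G"
  show "x \<in> (\<Union>b \<in> carrier H - {\<one>\<^bsub>H\<^esub>}. {x \<in> carrier G. h x \<in> generate H {b}})"
  proof (cases "h x = \<one>\<^bsub>H\<^esub>")
    case True
    obtain b where b: "b \<in> carrier H - {\<one>\<^bsub>H\<^esub>}"
      using assms H.one_closed by blast
    have "\<one>\<^bsub>H\<^esub> \<in> generate H {b}"
      by (rule generate.one)
    then show ?thesis
      using x True by (intro UN_I[OF b]) simp
  next
    case False
    moreover have "h x \<in> generate H {h x}"
      by (rule generate.incl) simp
    ultimately show ?thesis
      using x by (intro UN_I[of "h x"]) auto
  qed
qed blast

lemma (in group_hom) preimage_generate_in_cover:
  assumes "h ` carrier G = carrier H" "carrier G = \<Union>\<A>"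
    and "\<And>A. A \<in> \<A> \<Longrightarrow> subgroup A G \<and> kernel G H h \<subseteq> A" "b \<in> carrier H"
  obtains A where "A \<in> \<A>" "{x \<in> carrier G. h x \<in> generate H {b}} \<subseteq> A"
proof -
  obtain a where a: "a \<in> carrier G" "b = h a"
    using assms(1,4) by blast
  then obtain A where "A \<in> \<A>" "a \<in> A"
    using assms(2) by blast
  then show thesis
    using that assms(3) preimage_generate_subset a(2) by blast
qed

lemma (in group_hom) not_cyclic_if_cover:
  assumes "h ` carrier G = carrier H" "carrier G = \<Union>\<A>"
    and "\<And>A. A \<in> \<A> \<Longrightarrow> subgroup A G \<and> kernel G H h \<subseteq> A \<and> A \<noteq> carrier G"
  shows "\<not> cyclic_group H"
proof
  assume "cyclic_group H"
  then obtain b where b: "b \<in> carrier H" "generate H {b} = carrier H"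
    using H.cyclic_group_iff_generate by blast
  obtain A where "A \<in> \<A>" "{x \<in> carrier G. h x \<in> generate H {b}} \<subseteq> A"
    by (rule preimage_generate_in_cover[OF assms(1,2) _ b(1)]) (use assms(3) in blast)+
  then have "carrier G \<subseteq> A"
    using b(2) by auto
  then show False
    using assms(3)[OF \<open>A \<in> \<A>\<close>] subgroup.subset by blast
qed

lemma Inf_enat_less_infinity_iff: "Inf {enat m | m. P m} < \<infinity> \<longleftrightarrow> (\<exists>m. P m)"
  unfolding Inf_less_iff by auto

lemma sectional_number_less_infinity_iff:
  "sectional_number G H f < \<infinity> \<longleftrightarrow>
     (\<exists>\<L>. finite \<L> \<and> \<L> \<noteq> {} \<and> \<Union>\<L> = carrier H \<and>
        (\<forall>L\<in>\<L>. subgroup L H \<and> L \<noteq> carrier H \<and> has_local_section G H f L))"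
  (is "_ \<longleftrightarrow> (\<exists>\<L>. ?cover \<L>)")
proof
  assume "sectional_number G H f < \<infinity>"
  then obtain m :: nat and Hs where "m > 0"
    and "\<forall>i < m. subgroup (Hs i) H \<and> Hs i \<noteq> carrier H \<and> has_local_section G H f (Hs i)"
    and "(\<Union>i < m. Hs i) = carrier H"
    unfolding sectional_number_def Inf_enat_less_infinity_iff by blast
  moreover have "finite (Hs ` {..<m})" "Hs ` {..<m} \<noteq> {}"
    using \<open>m > 0\<close> by auto
  ultimately have "?cover (Hs ` {..<m})" by blast
  then show "\<exists>\<L>. ?cover \<L>" ..
next
  assume "\<exists>\<L>. ?cover \<L>"
  then obtain \<L> where \<L>: "?cover \<L>" ..
  then obtain e where e: "bij_betw e {..<card \<L>} \<L>"
    using ex_bij_betw_nat_finite lessThan_atLeast0 by metis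
  have "card \<L> > 0"
    using \<L> card_gt_0_iff by blast
  moreover have "\<forall>i < card \<L>. subgroup (e i) H \<and> e i \<noteq> carrier H \<and> has_local_section G H f (e i)"
    using \<L> bij_betwE[OF e] by blast
  moreover have "(\<Union>i < card \<L>. e i) = carrier H"
    using \<L> bij_betw_imp_surj_on[OF e] by simp
  ultimately show "sectional_number G H f < \<infinity>"
    unfolding sectional_number_def Inf_enat_less_infinity_iff by blast
qed

lemma has_local_section_subset:
  assumes "has_local_section G H f A" "B \<subseteq> A"
  shows "has_local_section G H f B"
proof -
  obtain s where "s \<in> hom (H\<lparr>carrier := A\<rparr>) G" "\<forall>x \<in> A. f (s x) = x"
    using assms(1) unfolding has_local_section_def by blast
  then have "s \<in> hom (H\<lparr>carrier := B\<rparr>) G" "\<forall>x \<in> B. f (s x) = x"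
    using assms(2) unfolding hom_def Pi_def by (simp_all add: subset_iff)
  then show ?thesis
    unfolding has_local_section_def by blast
qed

lemma sectional_number_finite_if_noncyclic_quotient:
  assumes \<phi>: "group_hom H K \<phi>" and surj: "\<phi> ` carrier H = carrier K"
    and "finite (carrier K)" and noncyclic: "\<not> cyclic_group K"
    and sections: "\<forall>b \<in> carrier K. b \<noteq> \<one>\<^bsub>K\<^esub> \<longrightarrow>
                     has_local_section G H f {h \<in> carrier H. \<phi> h \<in> generate K {b}}"
  shows "sectional_number G H f < \<infinity>"
proof -
  interpret K: group K
    using \<phi> group_hom.axioms(2) by blast
  define L where "L b = {h \<in> carrier H. \<phi> h \<in> generate K {b}}" for b
  have "\<not> trivial_group K"
    using noncyclic trivial_imp_cyclic_group by blast
  then have nontrivial: "carrier K \<noteq> {\<one>\<^bsub>K\<^esub>}"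
    unfolding trivial_group_def using K.is_group by blast
  have L: "subgroup (L b) H \<and> L b \<noteq> carrier H \<and> has_local_section G H f (L b)"
    if b: "b \<in> carrier K - {\<one>\<^bsub>K\<^esub>}" for b
  proof (intro conjI)
    have bK: "b \<in> carrier K"
      using b by blast
    show "subgroup (L b) H"
      unfolding L_def using bK by (intro group_hom.subgroup_preimage[OF \<phi>] K.generate_is_subgroup) simp
    show "L b \<noteq> carrier H"
      unfolding L_def by (rule group_hom.preimage_generate_ne_carrier[OF \<phi> surj noncyclic bK])
    show "has_local_section G H f (L b)"
      unfolding L_def using sections b by blast
  qed
  show ?thesis
    unfolding sectional_number_less_infinity_iff
  proof (intro exI conjI)
    show "finite (L ` (carrier K - {\<one>\<^bsub>K\<^esub>}))"
      using \<open>finite (carrier K)\<close> by simp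
    show "L ` (carrier K - {\<one>\<^bsub>K\<^esub>}) \<noteq> {}"
      using nontrivial K.one_closed by blast
    show "\<Union>(L ` (carrier K - {\<one>\<^bsub>K\<^esub>})) = carrier H"
      unfolding L_def using group_hom.preimages_of_cyclic_subgroups_cover[OF \<phi> nontrivial] by simp
    show "\<forall>M \<in> L ` (carrier K - {\<one>\<^bsub>K\<^esub>}). subgroup M H \<and> M \<noteq> carrier H \<and> has_local_section G H f M"
      using L by blast
  qed
qed

lemma noncyclic_quotient_if_finite_index_cover:
  fixes H :: "'b monoid"
  assumes "group H" and "finite \<F>" and cover: "carrier H = \<Union>\<F>"
    and F: "\<And>L. L \<in> \<F> \<Longrightarrow> subgroup L H \<and> L \<noteq> carrier H \<and> finite (rcosets\<^bsub>H\<^esub> L) \<and>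
                    has_local_section G H f L"
    and N: "\<Inter>\<F> \<lhd> H"
  shows "\<exists>(K :: 'b set monoid) \<phi>.
           group K \<and> finite (carrier K) \<and> \<not> cyclic_group K \<and>
           \<phi> \<in> hom H K \<and> \<phi> ` carrier H = carrier K \<and>
           (\<forall>b \<in> carrier K. b \<noteq> \<one>\<^bsub>K\<^esub> \<longrightarrow>
              has_local_section G H f {h \<in> carrier H. \<phi> h \<in> generate K {b}})"
proof -
  interpret group H by fact
  define N where "N = \<Inter>\<F>"
  have "\<F> \<noteq> {}"
    using cover by auto
  have "finite (rcosets\<^bsub>H\<^esub> N)"
    unfolding N_def using F \<open>\<F> \<noteq> {}\<close> \<open>finite \<F>\<close> by (intro finite_index_Inter) auto
  define \<phi> where "\<phi> a = N #>\<^bsub>H\<^esub> a" for a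
  have \<phi>: "group_hom H (H Mod N) \<phi>"
    unfolding \<phi>_def N_def group_hom_def group_hom_axioms_def
    using normal.factorgroup_is_group[OF N] normal.r_coset_hom_Mod[OF N] is_group by blast
  have surj: "\<phi> ` carrier H = carrier (H Mod N)"
    unfolding \<phi>_def FactGroup_def RCOSETS_def by auto
  have ker: "subgroup L H \<and> kernel H (H Mod N) \<phi> \<subseteq> L \<and> L \<noteq> carrier H" if "L \<in> \<F>" for L
    using that F normal.kernel_r_coset_hom_Mod[OF N] unfolding \<phi>_def N_def by blast
  have sections: "\<forall>b \<in> carrier (H Mod N). b \<noteq> \<one>\<^bsub>H Mod N\<^esub> \<longrightarrow>
      has_local_section G H f {h \<in> carrier H. \<phi> h \<in> generate (H Mod N) {b}}"
  proof (intro ballI impI)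
    fix b assume b: "b \<in> carrier (H Mod N)"
    show "has_local_section G H f {h \<in> carrier H. \<phi> h \<in> generate (H Mod N) {b}}"
    proof (rule group_hom.preimage_generate_in_cover[OF \<phi> surj cover _ b])
      show "\<And>L. L \<in> \<F> \<Longrightarrow> subgroup L H \<and> kernel H (H Mod N) \<phi> \<subseteq> L"
        using ker by blast
      fix L assume "L \<in> \<F>" "{h \<in> carrier H. \<phi> h \<in> generate (H Mod N) {b}} \<subseteq> L"
      then show ?thesis
        using F has_local_section_subset by blast
    qed
  qed
  have "group (H Mod N)"
    unfolding N_def by (rule normal.factorgroup_is_group[OF N])
  moreover have "finite (carrier (H Mod N))"
    using \<open>finite (rcosets\<^bsub>H\<^esub> N)\<close> unfolding FactGroup_def by simp
  moreover have "\<not> cyclic_group (H Mod N)"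
    by (rule group_hom.not_cyclic_if_cover[OF \<phi> surj cover ker])
  moreover have "\<phi> \<in> hom H (H Mod N)"
    by (rule group_hom.homh[OF \<phi>])
  ultimately show ?thesis
    using surj sections by blast
qed

lemma noncyclic_quotient_if_sectional_number_finite:
  fixes H :: "'b monoid"
  assumes "comm_group H" and "sectional_number G H f < \<infinity>"
  shows "\<exists>(K :: 'b set monoid) \<phi>.
           group K \<and> finite (carrier K) \<and> \<not> cyclic_group K \<and>
           \<phi> \<in> hom H K \<and> \<phi> ` carrier H = carrier K \<and>
           (\<forall>b \<in> carrier K. b \<noteq> \<one>\<^bsub>K\<^esub> \<longrightarrow>
              has_local_section G H f {h \<in> carrier H. \<phi> h \<in> generate K {b}})"
proof -
  interpret comm_group H by fact
  obtain \<L> where \<L>: "finite \<L>" "\<Union>\<L> = carrier H"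
    and L: "\<And>L. L \<in> \<L> \<Longrightarrow> subgroup L H \<and> L \<noteq> carrier H \<and> has_local_section G H f L"
    using assms(2) unfolding sectional_number_less_infinity_iff by blast
  define \<F> where "\<F> = {L \<in> \<L>. finite (rcosets\<^bsub>H\<^esub> L)}"
  have cover: "carrier H = \<Union>\<F>"
    unfolding \<F>_def using \<L> L by (intro finite_index_subgroups_cover) auto
  then have "subgroup (\<Inter>\<F>) H"
    using L unfolding \<F>_def by (intro subgroups_Inter) auto
  then show ?thesis
    using \<L>(1) L unfolding \<F>_def
    by (intro noncyclic_quotient_if_finite_index_cover[OF is_group _ cover[unfolded \<F>_def]]
        subgroup_imp_normal) auto
qed

theorem theorem2p14:
  fixes G :: "'a monoid" and H :: "'b monoid" and f :: "'a \<Rightarrow> 'b"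
  assumes "group G" and "group H"
    and "f \<in> hom G H" and "f ` carrier G = carrier H"
  shows "(\<forall>(K :: 'c monoid) \<phi>.
            group K \<and> finite (carrier K) \<and> \<not> cyclic_group K \<and>
            \<phi> \<in> hom H K \<and> \<phi> ` carrier H = carrier K \<and>
            (\<forall>b \<in> carrier K. b \<noteq> \<one>\<^bsub>K\<^esub> \<longrightarrow>
               has_local_section G H f {h \<in> carrier H. \<phi> h \<in> generate K {b}})
          \<longrightarrow> sectional_number G H f < \<infinity>)
       \<and> (comm_group H \<and> sectional_number G H f < \<infinity> \<longrightarrow>
          (\<exists>(K :: 'b set monoid) \<phi>.
            group K \<and> finite (carrier K) \<and> \<not> cyclic_group K \<and>
            \<phi> \<in> hom H K \<and> \<phi> ` carrier H = carrier K \<and>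
            (\<forall>b \<in> carrier K. b \<noteq> \<one>\<^bsub>K\<^esub> \<longrightarrow>
               has_local_section G H f {h \<in> carrier H. \<phi> h \<in> generate K {b}})))"
proof (intro conjI allI impI, goal_cases)
  \<comment> \<open>neither direction uses group G or the hypotheses on f\<close>
  case (1 K \<phi>)
  then have "group_hom H K \<phi>"
    using assms(2) by (simp add: group_hom_def group_hom_axioms_def)
  with 1 show ?case
    by (elim conjE) (rule sectional_number_finite_if_noncyclic_quotient, assumption+)
next
  case 2
  then show ?case
    by (elim conjE) (rule noncyclic_quotient_if_sectional_number_finite)
qed

end
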